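(* Let $L$ be a distributive lattice with a maximum and a minimum. Then $\mathrm{FVL}\langle L\rangle$ is order dense in $\mathrm{FBL}\langle L\rangle$, i.e. for every $f\in\mathrm{FBL}\langle L\rangle$ with $f>0$ there exists $g\in\mathrm{FVL}\langle L\rangle$ with $0<g\le f$.
   Context: $L^*$ is the set of all lattice homomorphisms $x^*:L\to[-1,1]$; for $x\in L$, $\delta_x:L^*\to\mathbb R$ is $\delta_x(x^* )=x^*(x)$. A function $f:L^*\to\mathbb R$ is positively homogeneous if $f(\lambda x^* )=\lambda f(x^* )$ whenever $\lambda\ge0$ and $\lambda x^*\in L^*$; for such $f$, $\|f\|=\sup\{\sum_{i=1}^m|f(x_i^* )|: m\in\mathbb N,\ x_i^*\in L^*,\ \sup_{x\in L}\sum_{i=1}^m|x_i^*(x)|\le1\}$. $\mathrm{FVL}\langle L\rangle$ is the vector sublattice generated by $\{\delta_x:x\in L\}$ (pointwise operations), and $\mathrm{FBL}\langle L\rangle$ is its norm closure inside the Banach lattice of positively homogeneous functions with finite norm, ordered pointwise. *)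

theory Defs
  imports Complex_Main
begin

text \<open>Elements of L* are functions 'a => real; functions on L* are ('a => real) => real,
  and all conditions below only look at their values on L*.\<close>

definition lattice_dual :: "('a::lattice \<Rightarrow> real) set" where
  "lattice_dual = {xs. (\<forall>a b. xs (sup a b) = max (xs a) (xs b)) \<and>
                       (\<forall>a b. xs (inf a b) = min (xs a) (xs b)) \<and>
                       (\<forall>a. xs a \<in> {-1..1})}"

definition delta :: "'a::lattice \<Rightarrow> ('a \<Rightarrow> real) \<Rightarrow> real" where
  "delta x = (\<lambda>xs. xs x)"

definition pos_homogeneous :: "(('a::lattice \<Rightarrow> real) \<Rightarrow> real) \<Rightarrow> bool" where
  "pos_homogeneous f \<longleftrightarrow> (\<forall>c::real. \<forall>xs\<in>lattice_dual. c \<ge> 0 \<longrightarrow>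
      (\<lambda>a. c * xs a) \<in> lattice_dual \<longrightarrow> f (\<lambda>a. c * xs a) = c * f xs)"

definition fbl_norm_set :: "(('a::lattice \<Rightarrow> real) \<Rightarrow> real) \<Rightarrow> real set" where
  "fbl_norm_set f = {(\<Sum>i<m. \<bar>f (xs i)\<bar>) | m xs.
      (\<forall>i<m. (xs :: nat \<Rightarrow> 'a \<Rightarrow> real) i \<in> lattice_dual) \<and> (\<forall>x. (\<Sum>i<m. \<bar>xs i x\<bar>) \<le> 1)}"

definition fbl_norm :: "(('a::lattice \<Rightarrow> real) \<Rightarrow> real) \<Rightarrow> real" where
  "fbl_norm f = Sup (fbl_norm_set f)"

definition finite_fbl_norm :: "(('a::lattice \<Rightarrow> real) \<Rightarrow> real) \<Rightarrow> bool" where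
  "finite_fbl_norm f \<longleftrightarrow> bdd_above (fbl_norm_set f)"

inductive_set FVL :: "(('a::lattice \<Rightarrow> real) \<Rightarrow> real) set" where
  delta: "delta x \<in> FVL"
| add: "f \<in> FVL \<Longrightarrow> g \<in> FVL \<Longrightarrow> (\<lambda>xs. f xs + g xs) \<in> FVL"
| scale: "f \<in> FVL \<Longrightarrow> (\<lambda>xs. c * f xs) \<in> FVL"
| max: "f \<in> FVL \<Longrightarrow> g \<in> FVL \<Longrightarrow> (\<lambda>xs. max (f xs) (g xs)) \<in> FVL"
| min: "f \<in> FVL \<Longrightarrow> g \<in> FVL \<Longrightarrow> (\<lambda>xs. min (f xs) (g xs)) \<in> FVL"

definition FBL :: "(('a::lattice \<Rightarrow> real) \<Rightarrow> real) set" where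
  "FBL = {f. pos_homogeneous f \<and> finite_fbl_norm f \<and>
      (\<forall>e>0. \<exists>g\<in>FVL. finite_fbl_norm (\<lambda>xs. f xs - g xs) \<and>
                       fbl_norm (\<lambda>xs. f xs - g xs) < e)}"

end

theory Submission
  imports Defs
begin

text \<open>Elements of \<open>L*\<close> are monotone, so on a bounded lattice their sup norm is
  \<open>N(x*) = max |x*(\<top>)| |x*(\<bot>)|\<close>, and \<open>N = |\<delta>\<^sub>\<top>| \<or> |\<delta>\<^sub>\<bot>|\<close> lies in \<open>FVL\<langle>L\<rangle>\<close>.
  By positive homogeneity every \<open>h\<close> of finite norm satisfies \<open>|h| \<le> \<parallel>h\<parallel> N\<close> on \<open>L*\<close>.
  Given \<open>f > 0\<close> with \<open>f(x\<^sub>0) > 0\<close>, approximate \<open>f\<close> by \<open>g \<in> FVL\<langle>L\<rangle>\<close> with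
  \<open>\<parallel>f - g\<parallel> < \<epsilon> = f(x\<^sub>0)/4\<close>; then \<open>(g - \<epsilon> N)\<^sup>+ \<in> FVL\<langle>L\<rangle>\<close> lies between \<open>0\<close> and \<open>f\<close>
  and is at least \<open>f(x\<^sub>0)/2\<close> at \<open>x\<^sub>0\<close>.\<close>

lemma FVL_diff: "f \<in> FVL \<Longrightarrow> g \<in> FVL \<Longrightarrow> (\<lambda>xs. f xs - g xs) \<in> FVL"
  using FVL.add[of f "\<lambda>xs. (-1) * g xs"] FVL.scale[of g "-1"] by simp

lemma FVL_abs:
  assumes "f \<in> FVL"
  shows "(\<lambda>xs. \<bar>f xs\<bar>) \<in> FVL"
proof -
  have "(\<lambda>xs. \<bar>f xs\<bar>) = (\<lambda>xs. max (f xs) ((-1) * f xs))"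
    by (auto simp: fun_eq_iff)
  then show ?thesis using assms by (simp only: FVL.max FVL.scale)
qed

lemma FVL_zero: "(\<lambda>xs. 0) \<in> FVL"
  using FVL.scale[OF FVL.delta, of 0] by simp

lemma FVL_pos_part: "f \<in> FVL \<Longrightarrow> (\<lambda>xs. max (f xs) 0) \<in> FVL"
  using FVL.max[of f "\<lambda>xs. 0"] FVL_zero by simp

lemma pos_homogeneousD:
  assumes "pos_homogeneous f" "xs \<in> lattice_dual" "c \<ge> 0" "(\<lambda>a. c * xs a) \<in> lattice_dual"
  shows "f (\<lambda>a. c * xs a) = c * f xs"
  using assms unfolding pos_homogeneous_def by blast

lemma FVL_pos_homogeneous_eq:
  assumes "g \<in> FVL" "c \<ge> 0"
  shows "g (\<lambda>a. c * xs a) = c * g xs"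
  using assms(1)
proof (induction arbitrary: xs)
  case (delta x)
  then show ?case by (simp add: delta_def)
next
  case (add f g)
  then show ?case by (simp add: algebra_simps)
next
  case (scale f c')
  then show ?case by simp
next
  case (max f g)
  then show ?case using assms(2) by (simp add: max_mult_distrib_left)
next
  case (min f g)
  then show ?case using assms(2) by (simp add: min_mult_distrib_left)
qed

lemma FVL_pos_homogeneous: "g \<in> FVL \<Longrightarrow> pos_homogeneous g"
  unfolding pos_homogeneous_def by (simp add: FVL_pos_homogeneous_eq)

lemma pos_homogeneous_diff:
  "pos_homogeneous f \<Longrightarrow> pos_homogeneous g \<Longrightarrow> pos_homogeneous (\<lambda>xs. f xs - g xs)"
  unfolding pos_homogeneous_def by (simp add: right_diff_distrib)

lemma lattice_dual_mono:
  assumes "x \<in> lattice_dual" "a \<le> b"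
  shows "x a \<le> x b"
proof -
  have "x b = x (sup a b)" using assms(2) by (simp add: sup_absorb2)
  also have "\<dots> = max (x a) (x b)" using assms(1) unfolding lattice_dual_def by blast
  finally show ?thesis by linarith
qed

lemma lattice_dual_scale:
  assumes "x \<in> lattice_dual" "c \<ge> 0" "\<And>a. c * \<bar>x a\<bar> \<le> 1"
  shows "(\<lambda>a. c * x a) \<in> lattice_dual"
proof -
  have "\<And>a b. c * x (sup a b) = max (c * x a) (c * x b)"
    and "\<And>a b. c * x (inf a b) = min (c * x a) (c * x b)"
    using assms(1,2) unfolding lattice_dual_def
    by (auto simp: max_mult_distrib_left min_mult_distrib_left)
  moreover have "c * x a \<in> {-1..1}" for a
  proof -
    have "\<bar>c * x a\<bar> \<le> 1" using assms(2,3) by (simp add: abs_mult)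
    then show ?thesis by (auto simp: abs_le_iff)
  qed
  ultimately show ?thesis unfolding lattice_dual_def by blast
qed

definition dual_sup_norm :: "('a::bounded_lattice \<Rightarrow> real) \<Rightarrow> real" where
  "dual_sup_norm x = max \<bar>x top\<bar> \<bar>x bot\<bar>"

lemma dual_sup_norm_nonneg: "dual_sup_norm x \<ge> 0"
  unfolding dual_sup_norm_def by simp

lemma abs_le_dual_sup_norm:
  assumes "x \<in> lattice_dual"
  shows "\<bar>x a\<bar> \<le> dual_sup_norm x"
  using lattice_dual_mono[OF assms, of a top] lattice_dual_mono[OF assms, of bot a]
  unfolding dual_sup_norm_def by simp

lemma dual_sup_norm_le_1: "x \<in> lattice_dual \<Longrightarrow> dual_sup_norm x \<le> 1"
  unfolding dual_sup_norm_def lattice_dual_def by (auto simp: abs_le_iff)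

lemma dual_sup_norm_in_FVL: "dual_sup_norm \<in> FVL"
proof -
  have "(\<lambda>xs. max \<bar>delta top xs\<bar> \<bar>delta bot xs\<bar>) \<in> FVL"
    by (intro FVL.max FVL_abs FVL.delta)
  then show ?thesis by (simp add: dual_sup_norm_def[abs_def] delta_def)
qed

lemma abs_le_fbl_norm:
  assumes "x \<in> lattice_dual" "finite_fbl_norm h"
  shows "\<bar>h x\<bar> \<le> fbl_norm h"
proof -
  have "\<bar>h x\<bar> \<in> fbl_norm_set h"
    unfolding fbl_norm_set_def
  proof (intro CollectI exI[of _ "Suc 0"] exI[of _ "\<lambda>_. x"] conjI)
    show "\<forall>a. (\<Sum>i<Suc 0. \<bar>x a\<bar>) \<le> 1"
      using assms(1) unfolding lattice_dual_def by (auto simp: abs_le_iff)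
  qed (use assms(1) in auto)
  then show ?thesis
    using assms(2) unfolding fbl_norm_def finite_fbl_norm_def by (simp add: cSup_upper)
qed

lemma abs_le_fbl_norm_mult_dual_sup_norm:
  assumes h: "pos_homogeneous h" "finite_fbl_norm h" and x: "x \<in> lattice_dual"
  shows "\<bar>h x\<bar> \<le> fbl_norm h * dual_sup_norm x"
proof (cases "dual_sup_norm x = 0")
  case True
  then have "x a = 0" for a
    using abs_le_dual_sup_norm[OF x, of a] by simp
  then have x_eq: "(\<lambda>a. 0 * x a) = x" by (simp add: fun_eq_iff)
  have "h (\<lambda>a. 0 * x a) = 0 * h x"
    using pos_homogeneousD[OF h(1) x order_refl] x x_eq by simp
  then show ?thesis using True x_eq by simp
next
  case False
  define n where "n = dual_sup_norm x"
  have n: "n > 0" using False dual_sup_norm_nonneg[of x] n_def by linarith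
  define y where "y = (\<lambda>a. (1 / n) * x a)"
  have y: "y \<in> lattice_dual"
  proof (unfold y_def, rule lattice_dual_scale[OF x])
    show "(1 / n) * \<bar>x a\<bar> \<le> 1" for a
      using abs_le_dual_sup_norm[OF x, of a] n n_def by simp
  qed (use n in simp)
  have x_eq: "(\<lambda>a. n * y a) = x" using n by (simp add: y_def)
  have "h x = n * h y"
    using pos_homogeneousD[OF h(1) y, of n] n x x_eq by simp
  also have "\<bar>\<dots>\<bar> \<le> n * fbl_norm h"
    using abs_le_fbl_norm[OF y h(2)] n by (simp add: abs_mult)
  finally show ?thesis by (simp add: n_def mult.commute)
qed

theorem mainTheorem7:
  fixes f :: "('a::{distrib_lattice, bounded_lattice} \<Rightarrow> real) \<Rightarrow> real"
  assumes "f \<in> FBL"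
    and "\<forall>xs\<in>lattice_dual. f xs \<ge> 0"
    and "\<exists>xs\<in>lattice_dual. f xs \<noteq> 0"
  shows "\<exists>g\<in>FVL. (\<forall>xs\<in>lattice_dual. 0 \<le> g xs \<and> g xs \<le> f xs)
                 \<and> (\<exists>xs\<in>lattice_dual. g xs \<noteq> 0)"
proof -
  obtain x0 where x0: "x0 \<in> lattice_dual" "f x0 > 0" using assms(2,3) by force
  define eps where "eps = f x0 / 4"
  have "eps > 0" using x0(2) by (simp add: eps_def)
  then obtain g where g: "g \<in> FVL" "finite_fbl_norm (\<lambda>xs. f xs - g xs)"
      "fbl_norm (\<lambda>xs. f xs - g xs) < eps"
    using assms(1) unfolding FBL_def by blast
  have diff_hom: "pos_homogeneous (\<lambda>xs. f xs - g xs)"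
    using assms(1) FVL_pos_homogeneous[OF g(1)] unfolding FBL_def
    by (simp add: pos_homogeneous_diff)
  have close: "\<bar>f x - g x\<bar> \<le> eps * dual_sup_norm x" if x: "x \<in> lattice_dual" for x
    using abs_le_fbl_norm_mult_dual_sup_norm[OF diff_hom g(2) x]
      mult_right_mono[OF less_imp_le[OF g(3)] dual_sup_norm_nonneg[of x]] by linarith
  define h where "h = (\<lambda>xs. max (g xs - eps * dual_sup_norm xs) 0)"
  have "h \<in> FVL"
    unfolding h_def by (intro FVL_pos_part FVL_diff FVL.scale g(1) dual_sup_norm_in_FVL)
  moreover have "0 \<le> h xs \<and> h xs \<le> f xs" if "xs \<in> lattice_dual" for xs
    using close[OF that] assms(2) that unfolding h_def by auto
  moreover have "h x0 \<noteq> 0"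
  proof -
    have "eps * dual_sup_norm x0 \<le> eps"
      using dual_sup_norm_le_1[OF x0(1)] \<open>eps > 0\<close> by (simp add: mult_left_le)
    then show ?thesis using close[OF x0(1)] x0(2) unfolding h_def eps_def by linarith
  qed
  ultimately show ?thesis using x0(1) by blast
qed

end
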